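(* In the setting of the context (QFSR scheme with $\kappa=1/3$, $\kappa_3=-2/3$, $\theta_2=2/3$), suppose the flux $f$ is a quadratic polynomial in $u$. Let $\mathcal{E}_j=(\Phi_{j+1/2}-\Phi_{j-1/2})/h$ evaluated on exact nodal values. Then as $h\to0$, with derivatives at $x_j$, $$\mathcal{E}_j=\frac{\partial f}{\partial x}+\left[\frac1{120}\frac{\partial f}{\partial u}\frac{\partial^5 u}{\partial x^5}-\frac{5}{216}\frac{\partial^2 f}{\partial u^2}\frac{\partial^2 u}{\partial x^2}\frac{\partial^3 u}{\partial x^3}\right]h^4+O(h^5),$$ where $f$ denotes $f(u(x))$ and $\partial f/\partial u$ is evaluated at $u(x_j)$.
   Context: Let $h>0$, uniform grid $x_i=ih$, $i\in\mathbb{Z}$. Let $u$ be a smooth real function of $x$, $u_i=u(x_i)$; let $f$ (flux) and $D$ (dissipation coefficient) be smooth real functions of one variable. Define successive central differences $(u_x)_i=(u_{i+1}-u_{i-1})/(2h)$, $(u_{xx})_i=((u_x)_{i+1}-(u_x)_{i-1})/(2h)$. For the face $i+1/2$ with $j=i$, $k=i+1$, let $T_j=\frac h4((u_x)_k-(u_x)_j)-\frac{h^2}{4}(u_{xx})_j$, $T_k=\frac h4((u_x)_k-(u_x)_j)-\frac{h^2}{4}(u_{xx})_k$, and reconstructed states (parameters $\kappa,\kappa_3$) $u_L=\kappa\frac{u_j+u_k}{2}+(1-\kappa)[u_j+\frac h2(u_x)_j]+\kappa_3T_j$, $u_R=\kappa\frac{u_j+u_k}{2}+(1-\kappa)[u_k-\frac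 h2(u_x)_k]+\kappa_3T_k$. With $\Delta_L=u_L-u_j$, $\Delta_R=u_R-u_k$ and parameter $\theta_2$, the reconstructed fluxes are $f_L=f(u_j)+f'(u_j)\Delta_L+\frac{\theta_2}{2}f''(u_j)\Delta_L^2$ and $f_R=f(u_k)+f'(u_k)\Delta_R+\frac{\theta_2}{2}f''(u_k)\Delta_R^2$. Numerical flux: $\Phi_{i+1/2}=\frac12(f_L+f_R)-\frac12D_{i+1/2}(u_R-u_L)$, with $D_{i+1/2}=\bar D(u_i,u_{i+1})$ for a smooth symmetric $\bar D$ with $\bar D(v,v)=D(v)$. *)

theory Defs
  imports "HOL-Analysis.Analysis"
begin

definition smooth1 :: "(real \<Rightarrow> real) \<Rightarrow> bool" where
  "smooth1 g \<longleftrightarrow> (\<forall>n x. ((deriv ^^ n) g) differentiable (at x))"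

definition pd1 :: "(real \<Rightarrow> real \<Rightarrow> real) \<Rightarrow> real \<Rightarrow> real \<Rightarrow> real" where
  "pd1 g = (\<lambda>a b. deriv (\<lambda>t. g t b) a)"
definition pd2 :: "(real \<Rightarrow> real \<Rightarrow> real) \<Rightarrow> real \<Rightarrow> real \<Rightarrow> real" where
  "pd2 g = (\<lambda>a b. deriv (\<lambda>t. g a t) b)"

definition smooth2 :: "(real \<Rightarrow> real \<Rightarrow> real) \<Rightarrow> bool" where
  "smooth2 g \<longleftrightarrow> (\<forall>m n p. (\<lambda>q. ((pd1 ^^ m) ((pd2 ^^ n) g)) (fst q) (snd q))
                         differentiable (at p))"

definition cdx :: "(real \<Rightarrow> real) \<Rightarrow> real \<Rightarrow> real \<Rightarrow> real" where
  "cdx u h y = (u (y + h) - u (y - h)) / (2 * h)"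
definition cdxx :: "(real \<Rightarrow> real) \<Rightarrow> real \<Rightarrow> real \<Rightarrow> real" where
  "cdxx u h y = (cdx u h (y + h) - cdx u h (y - h)) / (2 * h)"

text \<open>Quantities at the face between nodes y (index j) and y+h (index k = j+1).\<close>
definition TL :: "(real \<Rightarrow> real) \<Rightarrow> real \<Rightarrow> real \<Rightarrow> real" where
  "TL u h y = h / 4 * (cdx u h (y + h) - cdx u h y) - h^2 / 4 * cdxx u h y"
definition TR :: "(real \<Rightarrow> real) \<Rightarrow> real \<Rightarrow> real \<Rightarrow> real" where
  "TR u h y = h / 4 * (cdx u h (y + h) - cdx u h y) - h^2 / 4 * cdxx u h (y + h)"

definition uL :: "real \<Rightarrow> real \<Rightarrow> (real \<Rightarrow> real) \<Rightarrow> real \<Rightarrow> real \<Rightarrow> real" where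
  "uL \<kappa> \<kappa>3 u h y = \<kappa> * (u y + u (y + h)) / 2 + (1 - \<kappa>) * (u y + h / 2 * cdx u h y)
                    + \<kappa>3 * TL u h y"
definition uR :: "real \<Rightarrow> real \<Rightarrow> (real \<Rightarrow> real) \<Rightarrow> real \<Rightarrow> real \<Rightarrow> real" where
  "uR \<kappa> \<kappa>3 u h y = \<kappa> * (u y + u (y + h)) / 2
                    + (1 - \<kappa>) * (u (y + h) - h / 2 * cdx u h (y + h)) + \<kappa>3 * TR u h y"

definition fL :: "real \<Rightarrow> real \<Rightarrow> real \<Rightarrow> (real \<Rightarrow> real) \<Rightarrow> (real \<Rightarrow> real) \<Rightarrow> real \<Rightarrow> real \<Rightarrow> real" where
  "fL \<kappa> \<kappa>3 \<theta>2 f u h y =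
     (let d = uL \<kappa> \<kappa>3 u h y - u y
      in f (u y) + deriv f (u y) * d + \<theta>2 / 2 * deriv (deriv f) (u y) * d^2)"
definition fR :: "real \<Rightarrow> real \<Rightarrow> real \<Rightarrow> (real \<Rightarrow> real) \<Rightarrow> (real \<Rightarrow> real) \<Rightarrow> real \<Rightarrow> real \<Rightarrow> real" where
  "fR \<kappa> \<kappa>3 \<theta>2 f u h y =
     (let d = uR \<kappa> \<kappa>3 u h y - u (y + h)
      in f (u (y + h)) + deriv f (u (y + h)) * d
         + \<theta>2 / 2 * deriv (deriv f) (u (y + h)) * d^2)"

definition Phi :: "real \<Rightarrow> real \<Rightarrow> real \<Rightarrow> (real \<Rightarrow> real) \<Rightarrow> (real \<Rightarrow> real \<Rightarrow> real)
                   \<Rightarrow> (real \<Rightarrow> real) \<Rightarrow> real \<Rightarrow> real \<Rightarrow> real" where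
  "Phi \<kappa> \<kappa>3 \<theta>2 f Dbar u h y =
     (fL \<kappa> \<kappa>3 \<theta>2 f u h y + fR \<kappa> \<kappa>3 \<theta>2 f u h y) / 2
     - Dbar (u y) (u (y + h)) * (uR \<kappa> \<kappa>3 u h y - uL \<kappa> \<kappa>3 u h y) / 2"

definition QFSR_err :: "(real \<Rightarrow> real) \<Rightarrow> (real \<Rightarrow> real \<Rightarrow> real) \<Rightarrow> (real \<Rightarrow> real)
                        \<Rightarrow> real \<Rightarrow> real \<Rightarrow> real" where
  "QFSR_err f Dbar u h x =
     (Phi (1/3) (-2/3) (2/3) f Dbar u h x - Phi (1/3) (-2/3) (2/3) f Dbar u h (x - h)) / h"

end

theory Submission
  imports Defs "HOL-Library.Landau_Symbols" "HOL-Complex_Analysis.Residue_Theorem"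
begin

text \<open>
  For a quadratic flux \<open>f v = a + b v + c v\<^sup>2\<close> the QFSR flux is exactly
  \<open>(f(u\<^sub>L) + f(u\<^sub>R))/2 - (c/6)(\<Delta>\<^sub>L\<^sup>2 + \<Delta>\<^sub>R\<^sup>2) - D (u\<^sub>R - u\<^sub>L)/2\<close>, and with
  \<open>\<kappa> = 1/3\<close>, \<open>\<kappa>\<^sub>3 = -2/3\<close> the states \<open>u\<^sub>L\<close>, \<open>u\<^sub>R\<close> are the fifth-order stencils
  \<open>(u\<^sub>j\<^sub>-\<^sub>2 - 6u\<^sub>j\<^sub>-\<^sub>1 + 20u\<^sub>j + 10u\<^sub>j\<^sub>+\<^sub>1 - u\<^sub>j\<^sub>+\<^sub>2)/24\<close> and its mirror image.
  Replacing the nodal values by the quintic Taylor polynomial of \<open>u\<close> at \<open>x\<^sub>j\<close> changes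
  these quadratic expressions only by \<open>O(h\<^sup>6)\<close>; on the polynomial the flux difference of
  the two faces is computed exactly and yields \<open>h\<close> times the stated expansion plus \<open>O(h\<^sup>7)\<close>.
  The jump \<open>u\<^sub>R - u\<^sub>L\<close> is a fifth difference divided by 24, hence \<open>O(h\<^sup>5)\<close> and equal
  on both faces up to \<open>O(h\<^sup>6)\<close>, while the dissipation coefficients of the two faces
  differ by \<open>O(h)\<close>; so the dissipation changes the flux difference only by \<open>O(h\<^sup>6)\<close>.
\<close>

section \<open>The scheme in stencil form\<close>

text \<open>\<open>grid u y h k\<close> is the value of \<open>u\<close> at the point \<open>k\<close> grid steps from \<open>y\<close>; the face
  \<open>y + h/2\<close> lies between the offsets \<open>0\<close> and \<open>1\<close>.\<close>

definition grid :: "(real \<Rightarrow> real) \<Rightarrow> real \<Rightarrow> real \<Rightarrow> real \<Rightarrow> real" where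
  "grid u y h k = u (y + k * h)"

definition recon_left :: "(real \<Rightarrow> real) \<Rightarrow> real" where
  "recon_left g = (g (-2) - 6 * g (-1) + 20 * g 0 + 10 * g 1 - g 2) / 24"

definition recon_right :: "(real \<Rightarrow> real) \<Rightarrow> real" where
  "recon_right g = (- g (-1) + 10 * g 0 + 20 * g 1 - 6 * g 2 + g 3) / 24"

definition recon_jump :: "(real \<Rightarrow> real) \<Rightarrow> real" where
  "recon_jump g = recon_right g - recon_left g"

text \<open>The factor \<open>c/6\<close> is \<open>(1 - \<theta>\<^sub>2) f''/4\<close> for \<open>\<theta>\<^sub>2 = 2/3\<close> and \<open>f'' = 2c\<close>: the
  truncated expansion \<open>f\<^sub>L\<close> falls short of \<open>f(u\<^sub>L)\<close> by \<open>(1 - \<theta>\<^sub>2) c \<Delta>\<^sub>L\<^sup>2\<close>.\<close>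

definition central_flux :: "(real \<Rightarrow> real) \<Rightarrow> real \<Rightarrow> (real \<Rightarrow> real) \<Rightarrow> real" where
  "central_flux f c g = (f (recon_left g) + f (recon_right g)) / 2
     - c / 6 * ((recon_left g - g 0)^2 + (recon_right g - g 1)^2)"

definition dissipation_flux :: "(real \<Rightarrow> real \<Rightarrow> real) \<Rightarrow> (real \<Rightarrow> real) \<Rightarrow> real \<Rightarrow> real \<Rightarrow> real" where
  "dissipation_flux Dbar u h y = Dbar (u y) (u (y + h)) * recon_jump (grid u y h) / 2"

lemma grid_shift: "grid u (x - h) h = (\<lambda>k. grid u x h (k - 1))"
  by (rule ext) (simp add: grid_def algebra_simps)

lemma uL_QFSR:
  assumes "h \<noteq> 0"
  shows "uL (1/3) (-2/3) u h y = recon_left (grid u y h)"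
proof -
  have "y + h + h = y + 2 * h" "y + h - h = y" "y - h + h = y" "y - h - h = y - 2 * h"
    by simp_all
  with assms show ?thesis
    unfolding uL_def TL_def cdxx_def cdx_def recon_left_def grid_def
    by (simp add: field_simps power2_eq_square)
qed

lemma uR_QFSR:
  assumes "h \<noteq> 0"
  shows "uR (1/3) (-2/3) u h y = recon_right (grid u y h)"
proof -
  have "y + h + h = y + 2 * h" "y + h - h = y" "y + 2 * h + h = y + 3 * h"
    "y + 2 * h - h = y + h" "y - h + h = y"
    by simp_all
  with assms show ?thesis
    unfolding uR_def TR_def cdxx_def cdx_def recon_right_def grid_def
    by (simp add: field_simps power2_eq_square)
qed

lemma deriv_quadratic: "deriv (\<lambda>v. a + b * v + c * v^2) = (\<lambda>v. b + 2 * c * v :: real)"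
  by (rule ext, rule DERIV_imp_deriv) (auto intro!: derivative_eq_intros)

lemma deriv_affine: "deriv (\<lambda>v. b + m * v) = (\<lambda>v. m :: real)"
  by (rule ext, rule DERIV_imp_deriv) (auto intro!: derivative_eq_intros)

lemma fL_quadratic:
  assumes "f = (\<lambda>v. a + b * v + c * v^2)"
  shows "fL \<kappa> \<kappa>3 \<theta>2 f u h y
    = f (uL \<kappa> \<kappa>3 u h y) - (1 - \<theta>2) * c * (uL \<kappa> \<kappa>3 u h y - u y)^2"
  unfolding fL_def Let_def assms deriv_quadratic deriv_affine
  by (simp add: algebra_simps power2_eq_square)

lemma fR_quadratic:
  assumes "f = (\<lambda>v. a + b * v + c * v^2)"
  shows "fR \<kappa> \<kappa>3 \<theta>2 f u h y
    = f (uR \<kappa> \<kappa>3 u h y) - (1 - \<theta>2) * c * (uR \<kappa> \<kappa>3 u h y - u (y + h))^2"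
  unfolding fR_def Let_def assms deriv_quadratic deriv_affine
  by (simp add: algebra_simps power2_eq_square)

lemma Phi_QFSR_quadratic:
  assumes "f = (\<lambda>v. a + b * v + c * v^2)" and "h \<noteq> 0"
  shows "Phi (1/3) (-2/3) (2/3) f Dbar u h y
    = central_flux f c (grid u y h) - dissipation_flux Dbar u h y"
  unfolding Phi_def fL_quadratic[OF assms(1)] fR_quadratic[OF assms(1)]
    uL_QFSR[OF assms(2)] uR_QFSR[OF assms(2)] central_flux_def dissipation_flux_def recon_jump_def
  by (simp add: field_simps grid_def)

lemma central_flux_quintic_shift:
  assumes "f = (\<lambda>v. a + b * v + c * v^2)"
    and "P = (\<lambda>k. U0 + U1 * k + U2 * k^2 + U3 * k^3 + U4 * k^4 + U5 * k^5)"
  shows "central_flux f c P - central_flux f c (\<lambda>k. P (k - 1))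
    = (b + 2 * c * U0) * (U1 + U5) - 5/9 * c * U2 * U3
      + c * (5/3 * U4 * U5 - 5/9 * U3 * U4 + 5/3 * U2 * U5)"
  unfolding assms central_flux_def recon_left_def recon_right_def
  by (simp add: field_simps power2_eq_square eval_nat_numeral)

lemma recon_jump_quintic:
  assumes "P = (\<lambda>k. U0 + U1 * k + U2 * k^2 + U3 * k^3 + U4 * k^4 + U5 * k^5)"
  shows "recon_jump (\<lambda>k. P (k + s)) = 5 * U5"
  unfolding assms recon_jump_def recon_left_def recon_right_def
  by (simp add: field_simps power2_eq_square eval_nat_numeral)

lemma recon_left_diff: "recon_left g - recon_left g' = recon_left (\<lambda>k. g k - g' k)"
  unfolding recon_left_def by (simp add: field_simps)

lemma recon_right_diff: "recon_right g - recon_right g' = recon_right (\<lambda>k. g k - g' k)"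
  unfolding recon_right_def by (simp add: field_simps)

lemma recon_jump_diff: "recon_jump g - recon_jump g' = recon_jump (\<lambda>k. g k - g' k)"
  unfolding recon_jump_def recon_left_def recon_right_def by (simp add: field_simps)

section \<open>Landau estimates\<close>

lemma bigo_mult_diff:
  fixes f f' g g' :: "'a \<Rightarrow> real"
  assumes "(\<lambda>x. f x - f' x) \<in> O[F](\<phi>)" "(\<lambda>x. g x - g' x) \<in> O[F](\<phi>)"
    and "f \<in> O[F](\<lambda>_. 1)" "g' \<in> O[F](\<lambda>_. 1)"
  shows "(\<lambda>x. f x * g x - f' x * g' x) \<in> O[F](\<phi>)"
proof -
  have "(\<lambda>x. (g x - g' x) * f x + (f x - f' x) * g' x) \<in> O[F](\<phi>)"
    using assms by (intro sum_in_bigo(1) landau_o.big_1_mult)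
  then show ?thesis by (simp add: algebra_simps)
qed

lemma bigo_square_diff:
  fixes f g :: "'a \<Rightarrow> real"
  assumes "(\<lambda>x. f x - g x) \<in> O[F](\<phi>)" "f \<in> O[F](\<lambda>_. 1)" "g \<in> O[F](\<lambda>_. 1)"
  shows "(\<lambda>x. (f x)^2 - (g x)^2) \<in> O[F](\<phi>)"
  using bigo_mult_diff[OF assms(1,1,2,3)] by (simp add: power2_eq_square)

lemma power_bigo_at_0:
  assumes "n \<le> m"
  shows "(\<lambda>h::real. h^m) \<in> O[at 0](\<lambda>h. h^n)"
proof -
  have "(\<lambda>h::real. h^(m - n)) \<in> O[at 0](\<lambda>_. 1)"
    by (intro continuous_imp_bigo_1 continuous_intros)
  then have "(\<lambda>h::real. h^n * h^(m - n)) \<in> O[at 0](\<lambda>h. h^n)"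
    by (rule landau_o.big_1_mult[OF landau_o.big_refl])
  with assms show ?thesis by (simp add: power_add[symmetric])
qed

lemma differentiable_imp_bigo_linear:
  fixes g :: "real \<Rightarrow> real"
  assumes "g differentiable (at 0)"
  shows "(\<lambda>h. g h - g 0) \<in> O[at 0](\<lambda>h. h)"
  using taylor_bigo_linear[of g 0 UNIV] assms
  by (simp add: field_differentiable_def real_differentiable_def)

lemma bigo_at_0_imp_bound:
  fixes g :: "real \<Rightarrow> real"
  assumes "g \<in> O[at 0](\<lambda>h. h^n)"
  shows "\<exists>C \<delta>. \<delta> > 0 \<and> (\<forall>h. 0 < h \<and> h < \<delta> \<longrightarrow> \<bar>g h\<bar> \<le> C * h^n)"
proof -
  obtain C where "eventually (\<lambda>h. norm (g h) \<le> C * norm (h^n)) (at 0)"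
    using assms by (elim landau_o.bigE) auto
  then obtain \<delta> where "\<delta> > 0" "\<And>h. h \<noteq> 0 \<Longrightarrow> \<bar>h\<bar> < \<delta> \<Longrightarrow> \<bar>g h\<bar> \<le> C * \<bar>h\<bar>^n"
    unfolding eventually_at by (auto simp: power_abs)
  then show ?thesis by (metis abs_of_pos less_irrefl)
qed

lemma recon_left_bigo:
  assumes "\<And>k. (\<lambda>h. G h k) \<in> O[F](\<phi>)"
  shows "(\<lambda>h. recon_left (G h)) \<in> O[F](\<phi>)"
  unfolding recon_left_def by (simp, intro sum_in_bigo) (simp_all add: assms)

lemma recon_right_bigo:
  assumes "\<And>k. (\<lambda>h. G h k) \<in> O[F](\<phi>)"
  shows "(\<lambda>h. recon_right (G h)) \<in> O[F](\<phi>)"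
  unfolding recon_right_def by (simp, intro sum_in_bigo) (simp_all add: assms)

lemma recon_jump_bigo:
  assumes "\<And>k. (\<lambda>h. G h k) \<in> O[F](\<phi>)"
  shows "(\<lambda>h. recon_jump (G h)) \<in> O[F](\<phi>)"
  unfolding recon_jump_def by (intro sum_in_bigo recon_left_bigo recon_right_bigo assms)

lemma central_flux_perturb:
  assumes f: "f = (\<lambda>v. a + b * v + c * v^2)"
    and GP: "\<And>k. (\<lambda>h. G h k - P h k) \<in> O[F](\<phi>)"
    and G: "\<And>k. (\<lambda>h. G h k) \<in> O[F](\<lambda>_. 1)" and P: "\<And>k. (\<lambda>h. P h k) \<in> O[F](\<lambda>_. 1)"
  shows "(\<lambda>h. central_flux f c (G h) - central_flux f c (P h)) \<in> O[F](\<phi>)"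
proof -
  define lG lP rG rP where "lG h = recon_left (G h)" and "lP h = recon_left (P h)"
    and "rG h = recon_right (G h)" and "rP h = recon_right (P h)" for h
  have dl: "(\<lambda>h. lG h - lP h) \<in> O[F](\<phi>)"
    unfolding lG_def lP_def recon_left_diff by (rule recon_left_bigo, rule GP)
  have dr: "(\<lambda>h. rG h - rP h) \<in> O[F](\<phi>)"
    unfolding rG_def rP_def recon_right_diff by (rule recon_right_bigo, rule GP)
  have dl0: "(\<lambda>h. (lG h - G h 0) - (lP h - P h 0)) \<in> O[F](\<phi>)"
    using sum_in_bigo(2)[OF dl GP[of 0]] by (simp add: algebra_simps)
  have dr1: "(\<lambda>h. (rG h - G h 1) - (rP h - P h 1)) \<in> O[F](\<phi>)"
    using sum_in_bigo(2)[OF dr GP[of 1]] by (simp add: algebra_simps)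
  have bdd: "lG \<in> O[F](\<lambda>_. 1)" "lP \<in> O[F](\<lambda>_. 1)" "rG \<in> O[F](\<lambda>_. 1)" "rP \<in> O[F](\<lambda>_. 1)"
    unfolding lG_def lP_def rG_def rP_def
    by (intro recon_left_bigo recon_right_bigo G P)+
  have sq: "(\<lambda>h. lG h^2 - lP h^2) \<in> O[F](\<phi>)" "(\<lambda>h. rG h^2 - rP h^2) \<in> O[F](\<phi>)"
    "(\<lambda>h. (lG h - G h 0)^2 - (lP h - P h 0)^2) \<in> O[F](\<phi>)"
    "(\<lambda>h. (rG h - G h 1)^2 - (rP h - P h 1)^2) \<in> O[F](\<phi>)"
      apply (rule bigo_square_diff[OF dl bdd(1,2)])
     apply (rule bigo_square_diff[OF dr bdd(3,4)])
    by (rule bigo_square_diff[OF dl0] bigo_square_diff[OF dr1]; intro sum_in_bigo bdd G P)+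
  have eq: "central_flux f c (G h) - central_flux f c (P h)
      = b / 2 * ((lG h - lP h) + (rG h - rP h)) + c / 2 * ((lG h^2 - lP h^2) + (rG h^2 - rP h^2))
        - c / 6 * (((lG h - G h 0)^2 - (lP h - P h 0)^2) + ((rG h - G h 1)^2 - (rP h - P h 1)^2))"
    for h
    by (simp add: central_flux_def f lG_def lP_def rG_def rP_def field_simps)
  have "(\<lambda>h. b / 2 * ((lG h - lP h) + (rG h - rP h)) + c / 2 * ((lG h^2 - lP h^2) + (rG h^2 - rP h^2))
      - c / 6 * (((lG h - G h 0)^2 - (lP h - P h 0)^2) + ((rG h - G h 1)^2 - (rP h - P h 1)^2)))
      \<in> O[F](\<phi>)"
    using dl dr sq by (auto intro!: sum_in_bigo)
  then show ?thesis unfolding eq .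
qed

section \<open>Smooth data on the grid\<close>

lemma smooth1_DERIV:
  "smooth1 u \<Longrightarrow> ((deriv ^^ m) u has_real_derivative (deriv ^^ Suc m) u t) (at t)"
  unfolding smooth1_def by (simp add: DERIV_deriv_iff_real_differentiable)

lemma smooth1_differentiable: "smooth1 u \<Longrightarrow> u differentiable (at t)"
  unfolding smooth1_def by (metis funpow_0)

lemma smooth1_continuous: "smooth1 u \<Longrightarrow> continuous (at t within S) ((deriv ^^ m) u)"
  unfolding smooth1_def by (meson differentiable_at_withinI differentiable_imp_continuous_within)

lemma smooth2_compose_differentiable:
  assumes "smooth2 g" "\<alpha> differentiable (at t)" "\<beta> differentiable (at t)"
  shows "(\<lambda>s. g (\<alpha> s) (\<beta> s)) differentiable (at t)"
proof -
  have "(\<lambda>q. g (fst q) (snd q)) differentiable (at (\<alpha> t, \<beta> t))"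
    using assms(1) unfolding smooth2_def by (metis funpow_0)
  then have "((\<lambda>q. g (fst q) (snd q)) \<circ> (\<lambda>s. (\<alpha> s, \<beta> s))) differentiable (at t)"
    by (intro differentiable_chain_at differentiable_Pair assms(2,3))
  then show ?thesis by (simp add: comp_def)
qed

definition taylor_poly :: "(real \<Rightarrow> real) \<Rightarrow> real \<Rightarrow> nat \<Rightarrow> real \<Rightarrow> real" where
  "taylor_poly u x n s = (\<Sum>i<n. (deriv ^^ i) u x / fact i * s^i)"

lemma taylor_poly_6_grid:
  "taylor_poly u x 6 (k * h) = (deriv ^^ 0) u x + ((deriv ^^ 1) u x * h) * k
     + ((deriv ^^ 2) u x / 2 * h^2) * k^2 + ((deriv ^^ 3) u x / 6 * h^3) * k^3
     + ((deriv ^^ 4) u x / 24 * h^4) * k^4 + ((deriv ^^ 5) u x / 120 * h^5) * k^5"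
  by (simp add: taylor_poly_def eval_nat_numeral fact_numeral algebra_simps)

lemma taylor_remainder_bigo:
  assumes u: "smooth1 u"
  shows "(\<lambda>h. u (x + k * h) - taylor_poly u x n (k * h)) \<in> O[at 0](\<lambda>h. h^n)"
proof -
  obtain M where M: "\<And>t. t \<in> {x - \<bar>k\<bar>..x + \<bar>k\<bar>} \<Longrightarrow> \<bar>(deriv ^^ n) u t\<bar> \<le> M"
    using continuous_on_compact_bound[OF compact_Icc continuous_at_imp_continuous_on]
      smooth1_continuous[OF u] by (metis real_norm_def)
  have "\<bar>u (x + k * h) - taylor_poly u x n (k * h)\<bar> \<le> M * \<bar>k\<bar>^n / fact n * \<bar>h^n\<bar>"
    if h: "\<bar>h\<bar> < 1" for h
  proof -
    have "((\<lambda>s. (deriv ^^ m) u (x + s)) has_real_derivative (deriv ^^ Suc m) u (x + s) * 1) (at s)"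
      for m s by (rule DERIV_chain2[OF smooth1_DERIV[OF u]]) (auto intro!: derivative_eq_intros)
    then have "\<forall>m s. ((\<lambda>s. (deriv ^^ m) u (x + s)) has_real_derivative (deriv ^^ Suc m) u (x + s)) (at s)"
      by simp
    from Maclaurin_all_le[where diff = "\<lambda>m s. (deriv ^^ m) u (x + s)", OF refl this]
    obtain t where t: "\<bar>t\<bar> \<le> \<bar>k * h\<bar>"
      and taylor: "u (x + k * h) = taylor_poly u x n (k * h) + (deriv ^^ n) u (x + t) / fact n * (k * h)^n"
      unfolding taylor_poly_def by auto
    have "\<bar>k * h\<bar> \<le> \<bar>k\<bar>" using h by (simp add: abs_mult mult_left_le)
    with t have "\<bar>(deriv ^^ n) u (x + t)\<bar> \<le> M" by (intro M) auto
    then show ?thesis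
      unfolding taylor
      by (simp add: abs_mult power_abs power_mult_distrib mult.assoc mult_right_mono divide_right_mono)
  qed
  then have "eventually (\<lambda>h. norm (u (x + k * h) - taylor_poly u x n (k * h))
      \<le> M * \<bar>k\<bar>^n / fact n * norm (h^n)) (at 0)"
    unfolding eventually_at by (intro exI[of _ 1]) auto
  then show ?thesis by (rule bigoI)
qed

lemma taylor_poly_grid_bigo_1: "(\<lambda>h. taylor_poly u x n (k * h)) \<in> O[at 0](\<lambda>_. 1)"
  unfolding taylor_poly_def by (intro continuous_imp_bigo_1 continuous_intros)

lemma grid_bigo_1:
  assumes "smooth1 u"
  shows "(\<lambda>h. grid u x h k) \<in> O[at 0](\<lambda>_. 1)"
  unfolding grid_def
proof (rule continuous_imp_bigo_1, rule isCont_o2[where f = "\<lambda>h. x + k * h"])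
  show "isCont u (x + k * 0)"
    using smooth1_continuous[OF assms, of _ UNIV 0] by simp
qed (intro continuous_intros)

section \<open>Truncation error\<close>

lemma central_part_bigo:
  assumes u: "smooth1 u" and f: "f = (\<lambda>v. a + b * v + c * v^2)"
  shows "(\<lambda>h. central_flux f c (grid u x h) - central_flux f c (grid u (x - h) h)
     - h * (deriv f (u x) * deriv u x
            + (1/120 * deriv f (u x) * (deriv ^^ 5) u x
               - 5/216 * deriv (deriv f) (u x) * (deriv ^^ 2) u x * (deriv ^^ 3) u x) * h^4))
     \<in> O[at 0](\<lambda>h. h^6)"
  (is "(\<lambda>h. _ - h * ?principal h) \<in> _")
proof -
  define p where "p h k = taylor_poly u x 6 (k * h)" for h k
  have rem: "(\<lambda>h. grid u x h k - p h k) \<in> O[at 0](\<lambda>h. h^6)" for k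
    unfolding p_def grid_def by (rule taylor_remainder_bigo[OF u])
  have near: "(\<lambda>h. central_flux f c (grid u x h) - central_flux f c (p h)) \<in> O[at 0](\<lambda>h. h^6)"
    by (rule central_flux_perturb[OF f rem grid_bigo_1[OF u]]) (simp add: p_def taylor_poly_grid_bigo_1)
  have near': "(\<lambda>h. central_flux f c (grid u (x - h) h) - central_flux f c (\<lambda>k. p h (k - 1)))
      \<in> O[at 0](\<lambda>h. h^6)"
    unfolding grid_shift
    by (rule central_flux_perturb[OF f rem grid_bigo_1[OF u]]) (simp add: p_def taylor_poly_grid_bigo_1)
  define d where "d i = (deriv ^^ i) u x" for i
  have "central_flux f c (p h) - central_flux f c (\<lambda>k. p h (k - 1)) - h * ?principal h
     = c * (5/3 * d 4 * d 5 / 2880 * h^9 - 5/9 * d 3 * d 4 / 144 * h^7 + 5/3 * d 2 * d 5 / 240 * h^7)"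
    for h
  proof -
    have "p h = (\<lambda>k. d 0 + (d 1 * h) * k + (d 2 / 2 * h^2) * k^2 + (d 3 / 6 * h^3) * k^3
        + (d 4 / 24 * h^4) * k^4 + (d 5 / 120 * h^5) * k^5)"
      unfolding p_def d_def taylor_poly_6_grid ..
    from central_flux_quintic_shift[OF f this] show ?thesis
      unfolding f deriv_quadratic deriv_affine d_def by (simp add: field_simps eval_nat_numeral)
  qed
  moreover have "(\<lambda>h. c * (5/3 * d 4 * d 5 / 2880 * h^9 - 5/9 * d 3 * d 4 / 144 * h^7
      + 5/3 * d 2 * d 5 / 240 * h^7)) \<in> O[at 0](\<lambda>h. h^6)"
    by (auto intro!: sum_in_bigo power_bigo_at_0)
  ultimately have "(\<lambda>h. central_flux f c (p h) - central_flux f c (\<lambda>k. p h (k - 1))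
      - h * ?principal h) \<in> O[at 0](\<lambda>h. h^6)"
    by simp
  from sum_in_bigo(1)[OF sum_in_bigo(2)[OF near near'] this] show ?thesis
    by (simp add: algebra_simps)
qed

lemma dissipation_coeffs_differentiable:
  assumes u: "smooth1 u" and D: "smooth2 Dbar"
  shows "(\<lambda>h. Dbar (u x) (u (x + h))) differentiable (at 0)"
    and "(\<lambda>h. Dbar (u (x - h)) (u x)) differentiable (at 0)"
proof -
  have "(\<lambda>h. u (x + h)) differentiable (at 0)" "(\<lambda>h. u (x - h)) differentiable (at 0)"
    by (rule differentiable_compose[OF smooth1_differentiable[OF u]], intro derivative_intros)+
  then show "(\<lambda>h. Dbar (u x) (u (x + h))) differentiable (at 0)"
    and "(\<lambda>h. Dbar (u (x - h)) (u x)) differentiable (at 0)"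
    by (simp_all add: smooth2_compose_differentiable[OF D])
qed

lemma dissipation_part_bigo:
  assumes u: "smooth1 u" and D: "smooth2 Dbar"
  shows "(\<lambda>h. dissipation_flux Dbar u h x - dissipation_flux Dbar u h (x - h)) \<in> O[at 0](\<lambda>h. h^6)"
proof -
  define p where "p h k = taylor_poly u x 6 (k * h)" for h k
  define J J' where "J h = recon_jump (grid u x h)" and "J' h = recon_jump (grid u (x - h) h)" for h
  define U5 where "U5 h = (deriv ^^ 5) u x / 120 * h^5" for h
  have rem: "(\<lambda>h. grid u x h k - p h k) \<in> O[at 0](\<lambda>h. h^6)" for k
    unfolding p_def grid_def by (rule taylor_remainder_bigo[OF u])
  have "recon_jump (\<lambda>k. p h (k + s)) = 5 * U5 h" for h s
    by (rule recon_jump_quintic) (unfold p_def U5_def taylor_poly_6_grid, rule refl)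
  from this[of _ 0] this[of _ "-1"]
  have jump_p: "recon_jump (p h) = 5 * U5 h" "recon_jump (\<lambda>k. p h (k - 1)) = 5 * U5 h" for h
    by simp_all
  have J_near: "(\<lambda>h. J h - 5 * U5 h) \<in> O[at 0](\<lambda>h. h^6)"
    unfolding J_def jump_p(1)[symmetric] recon_jump_diff by (rule recon_jump_bigo, rule rem)
  have J'_near: "(\<lambda>h. J' h - 5 * U5 h) \<in> O[at 0](\<lambda>h. h^6)"
    unfolding J'_def grid_shift jump_p(2)[symmetric] recon_jump_diff by (rule recon_jump_bigo, rule rem)
  have "(\<lambda>h. J h - 5 * U5 h + 5 * U5 h) \<in> O[at 0](\<lambda>h. h^5)"
    by (intro sum_in_bigo landau_o.big_trans[OF J_near power_bigo_at_0]) (simp_all add: U5_def)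
  then have J_small: "J \<in> O[at 0](\<lambda>h. h^5)" by simp
  from sum_in_bigo(2)[OF J_near J'_near]
  have JJ': "(\<lambda>h. J h - J' h) \<in> O[at 0](\<lambda>h. h^6)" by simp
  have coeff_diff: "(\<lambda>h. Dbar (u x) (u (x + h)) - Dbar (u (x - h)) (u x)) \<in> O[at 0](\<lambda>h. h)"
    using sum_in_bigo(2)[OF dissipation_coeffs_differentiable[where x = x, OF u D,
        THEN differentiable_imp_bigo_linear]]
    by simp
  have coeff_bdd: "(\<lambda>h. Dbar (u (x - h)) (u x)) \<in> O[at 0](\<lambda>_. 1)"
    by (rule continuous_imp_bigo_1, rule differentiable_imp_continuous_within)
      (rule dissipation_coeffs_differentiable(2)[OF u D])
  have "(\<lambda>h. (Dbar (u x) (u (x + h)) - Dbar (u (x - h)) (u x)) * J h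
      + (J h - J' h) * Dbar (u (x - h)) (u x)) \<in> O[at 0](\<lambda>h. h^6)"
    using landau_o.big.mult[OF coeff_diff J_small]
    by (intro sum_in_bigo landau_o.big_1_mult[OF JJ' coeff_bdd]) (simp add: power_Suc[symmetric])
  moreover have eq: "dissipation_flux Dbar u h x - dissipation_flux Dbar u h (x - h)
      = ((Dbar (u x) (u (x + h)) - Dbar (u (x - h)) (u x)) * J h
         + (J h - J' h) * Dbar (u (x - h)) (u x)) / 2" for h
    by (simp add: dissipation_flux_def J_def J'_def field_simps)
  ultimately show ?thesis unfolding eq by simp
qed

lemma QFSR_err_expansion_bigo:
  assumes u: "smooth1 u" and f: "f = (\<lambda>v. a + b * v + c * v^2)" and D: "smooth2 Dbar"
  shows "(\<lambda>h. QFSR_err f Dbar u h x - (deriv f (u x) * deriv u x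
      + (1/120 * deriv f (u x) * (deriv ^^ 5) u x
         - 5/216 * deriv (deriv f) (u x) * (deriv ^^ 2) u x * (deriv ^^ 3) u x) * h^4))
    \<in> O[at 0](\<lambda>h. h^5)"
  (is "(\<lambda>h. QFSR_err f Dbar u h x - ?principal h) \<in> _")
proof -
  have "(\<lambda>h. (central_flux f c (grid u x h) - central_flux f c (grid u (x - h) h) - h * ?principal h)
      - (dissipation_flux Dbar u h x - dissipation_flux Dbar u h (x - h))) \<in> O[at 0](\<lambda>h. h^6)"
    by (rule sum_in_bigo(2)[OF central_part_bigo[where x = x, OF u f]
          dissipation_part_bigo[where x = x, OF u D]])
  also have "eventually (\<lambda>h. (central_flux f c (grid u x h) - central_flux f c (grid u (x - h) h)
        - h * ?principal h) - (dissipation_flux Dbar u h x - dissipation_flux Dbar u h (x - h))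
      = h * (QFSR_err f Dbar u h x - ?principal h)) (at 0)"
    using eventually_neq_at_within[of 0 0 UNIV]
  proof eventually_elim
    case (elim h)
    then show ?case
      unfolding QFSR_err_def Phi_QFSR_quadratic[OF f elim] by (simp add: field_simps)
  qed
  note landau_o.big.in_cong[OF this]
  finally have "(\<lambda>h. h * (QFSR_err f Dbar u h x - ?principal h)) \<in> O[at 0](\<lambda>h. h * h^5)"
    by (simp add: power_Suc[symmetric])
  then show ?thesis
    by (subst (asm) landau_o.big.mult_cancel_left) (auto simp: eventually_neq_at_within)
qed

theorem mainTheorem7:
  fixes u f D :: "real \<Rightarrow> real" and Dbar :: "real \<Rightarrow> real \<Rightarrow> real" and x :: real
  assumes u_smooth: "smooth1 u"
    and f_quad: "\<exists>a b c. \<forall>v. f v = a + b * v + c * v^2"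
    and D_smooth: "smooth1 D"
    and Dbar_smooth: "smooth2 Dbar"
    and Dbar_sym: "\<forall>a b. Dbar a b = Dbar b a"
    and Dbar_diag: "\<forall>v. Dbar v v = D v"
  shows "\<exists>C \<delta>. \<delta> > 0 \<and> (\<forall>h. 0 < h \<and> h < \<delta> \<longrightarrow>
           \<bar>QFSR_err f Dbar u h x
             - (deriv (\<lambda>t. f (u t)) x
                + (1/120 * deriv f (u x) * (deriv ^^ 5) u x
                   - 5/216 * deriv (deriv f) (u x) * (deriv ^^ 2) u x * (deriv ^^ 3) u x) * h^4)\<bar>
           \<le> C * h^5)"
proof -
  obtain a b c where f: "f = (\<lambda>v. a + b * v + c * v^2)"
    using f_quad by blast
  have "deriv (\<lambda>t. f (u t)) x = deriv f (u x) * deriv u x"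
    by (rule DERIV_imp_deriv, rule DERIV_chain2[of f])
      (use smooth1_DERIV[OF u_smooth, of 0] in \<open>auto simp: f deriv_quadratic intro!: derivative_eq_intros\<close>)
  with QFSR_err_expansion_bigo[OF u_smooth f Dbar_smooth] show ?thesis
    by (simp add: bigo_at_0_imp_bound)
qed

end
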